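(* Consider the Truthful Interval Covering setting with $n$ agents and unit-length intervals. Let $\mathcal{M}$ be a deterministic truthful mechanism, $\mathcal{I}$ an instance and $i$ an agent such that $I_i\cap\mathcal{M}(\mathcal{I})$ has positive length. Let $I_i'$ be a unit interval such that $I_i'\cap I_i\cap \mathcal{M}(\mathcal{I})$ has positive length, and let $\mathcal{I}'=(I_i',\mathcal{I}_{-i})$. Then $I_i'\cap \mathcal{M}(\mathcal{I}')$ has positive length.
   Context: There are $n$ agents; agent $i$ has an interval $I_i=[s_i,s_i+1]$ of length $1$; an instance is $\mathcal{I}=(I_1,\dots,I_n)$ and $\mathcal{I}_{-i}$ denotes the intervals of all agents other than $i$. A deterministic mechanism maps each reported instance to a unit covering interval $\mathcal{M}(\mathcal{I})$. Agent $i$'s cost is $\mathrm{cost}_i(C)=1-|I_i\cap C|$ ($|\cdot|$ = length). $\mathcal{M}$ is truthful if for every instance $\mathcal{I}$, agent $i$ and misreport $I_i'$, $\mathrm{cost}_i(\mathcal{M}(\mathcal{I}))\le\mathrm{cost}_i(\mathcal{M}(I_i',\mathcal{I}_{-i}))$. *)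

theory Defs
  imports "HOL-Analysis.Analysis"
begin

text \<open>Agents are the elements of a finite type 'a (so n = CARD('a)).
  A unit interval [s, s+1] is represented by its left endpoint s.
  An instance is a map from agents to left endpoints; a deterministic
  mechanism maps an instance to the left endpoint of the covering interval.\<close>

definition unit_iv :: "real \<Rightarrow> real set" where
  "unit_iv s = {s..s+1}"

definition ilen :: "real set \<Rightarrow> real" where
  "ilen A = measure lborel A"

definition cost :: "real \<Rightarrow> real \<Rightarrow> real" where
  "cost s c = 1 - ilen (unit_iv s \<inter> unit_iv c)"

definition truthful :: "(('a::finite \<Rightarrow> real) \<Rightarrow> real) \<Rightarrow> bool" where
  "truthful M \<longleftrightarrow>
     (\<forall>I i t. cost (I i) (M I) \<le> cost (I i) (M (I(i := t))))"

end

theory Submission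
  imports Defs
begin

text \<open>If agent i, whose true interval is t, received a covering interval missing t
  (up to measure zero) at the instance with t reported, it could instead report
  its old interval I i. That returns the mechanism to the instance I, whose covering
  interval meets t in positive length, so truthfulness would be violated.\<close>

lemma ilen_unit_iv_Int_mono:
  assumes "S \<in> sets lborel"
  shows "ilen (unit_iv a \<inter> S \<inter> unit_iv b) \<le> ilen (unit_iv a \<inter> unit_iv b)"
  unfolding ilen_def
  by (rule measure_mono_fmeasurable)
     (use assms in \<open>auto simp: unit_iv_def fmeasurable_def emeasure_lborel_Icc_eq\<close>)

lemma truthful_cost_le_update:
  assumes "truthful M"
  shows "cost t (M (I(i := t))) \<le> cost t (M (I(i := s)))"
proof -
  have "cost ((I(i := t)) i) (M (I(i := t))) \<le> cost ((I(i := t)) i) (M ((I(i := t))(i := s)))"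
    using assms unfolding truthful_def by blast
  then show ?thesis by simp
qed

lemma truthful_overlap_le_update:
  assumes "truthful M"
  shows "ilen (unit_iv t \<inter> unit_iv (M I)) \<le> ilen (unit_iv t \<inter> unit_iv (M (I(i := t))))"
  using truthful_cost_le_update[OF assms, of t I i "I i"] by (simp add: cost_def)

theorem lemma1:
  fixes M :: "('a::finite \<Rightarrow> real) \<Rightarrow> real"
    and I :: "'a \<Rightarrow> real" and i :: 'a and t :: real
  assumes "truthful M"
    and "ilen (unit_iv (I i) \<inter> unit_iv (M I)) > 0"
    and "ilen (unit_iv t \<inter> unit_iv (I i) \<inter> unit_iv (M I)) > 0"
  shows "ilen (unit_iv t \<inter> unit_iv (M (I(i := t)))) > 0"
proof -
  have "ilen (unit_iv t \<inter> unit_iv (I i) \<inter> unit_iv (M I)) \<le> ilen (unit_iv t \<inter> unit_iv (M I))"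
    by (rule ilen_unit_iv_Int_mono) (simp add: unit_iv_def)
  also have "\<dots> \<le> ilen (unit_iv t \<inter> unit_iv (M (I(i := t))))"
    using assms(1) by (rule truthful_overlap_le_update)
  finally show ?thesis using assms(3) by linarith
qed

end
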